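(* Assume the setting below. Let $\theta,\theta':\mathbb{Z}\to[0,1]$ be finitely supported and not identically zero, with $a=\min\{z:\theta(z)\neq0\}$, $b=\max\{z:\theta(z)\neq0\}$, $a'=\min\{z:\theta'(z)\neq0\}$, $b'=\max\{z:\theta'(z)\neq0\}$, and suppose $b-a=b'-a'=\ell$. If $p^{\theta}_{\mathbf{t}}=p^{\theta'}_{\mathbf{t}}$ for every $k\in\mathbb{N}$ and every $\mathbf{t}\in\mathbb{N}^k$, then $$(\theta'(a'),\theta'(a'+1),\dots,\theta'(b'))\in\big\{(\theta(a),\theta(a+1),\dots,\theta(b)),\ (\theta(b),\theta(b-1),\dots,\theta(a))\big\}.$$ That is, given $\ell$, the unordered pair of the sequence $(\theta(a),\dots,\theta(b))$ and its reversal is uniquely determined by the quantities $\{p^\theta_{\mathbf{t}}\}$.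
   Context: Setting: $q$ is a probability mass function on $\mathbb{Z}$ with $\sum_z zq(z)=0$, $\sum_z z^2q(z)<\infty$, $q(z)=q(-z)$ for all $z$, $\gcd\{n\ge1:q^{*n}(0)>0\}=1$, and support generating $\mathbb{Z}$; $S$ is the random walk with increment law $q$. For a bias function $\theta:\mathbb{Z}\to[0,1]$, the coin-toss observations are $\{-1,1\}$-valued $X_n$ which, conditionally on $S$, are independent with $E[X_n\mid S]=\theta(S_n)$. For $\mathbf{t}=(t_1,\dots,t_k)\in\mathbb{N}^k$, $$p^\theta_{\mathbf{t}}=\sum_{z\in\mathbb{Z}}E\big[X_0X_{t_1}X_{t_1+t_2}\cdots X_{t_1+\cdots+t_k}\,\big|\,S_0=z\big]$$ computed for the observations from $\theta$. *)

theory Defs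
  imports "HOL-Probability.Probability"
begin

text \<open>n-fold convolution power of an increment law q on the integers:
  the law of S_n - S_0 for the random walk with increments q.\<close>
primrec conv_pow :: "int pmf \<Rightarrow> nat \<Rightarrow> int pmf" where
  "conv_pow q 0 = return_pmf 0"
| "conv_pow q (Suc n) = bind_pmf (conv_pow q n) (\<lambda>x. map_pmf (\<lambda>y. x + y) q)"

definition walk_at :: "int pmf \<Rightarrow> int \<Rightarrow> nat \<Rightarrow> int pmf" where
  "walk_at q z n = map_pmf (\<lambda>y. z + y) (conv_pow q n)"

inductive_set int_subgroup_gen :: "int set \<Rightarrow> int set" for A where
  base: "x \<in> A \<Longrightarrow> x \<in> int_subgroup_gen A"
| zero: "0 \<in> int_subgroup_gen A"
| add: "x \<in> int_subgroup_gen A \<Longrightarrow> y \<in> int_subgroup_gen A \<Longrightarrow> x + y \<in> int_subgroup_gen A"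
| neg: "x \<in> int_subgroup_gen A \<Longrightarrow> - x \<in> int_subgroup_gen A"

definition good_increment :: "int pmf \<Rightarrow> bool" where
  "good_increment q \<longleftrightarrow>
     integrable (measure_pmf q) (\<lambda>z. (real_of_int z)\<^sup>2) \<and>
     integrable (measure_pmf q) (\<lambda>z. real_of_int z) \<and>
     measure_pmf.expectation q (\<lambda>z. real_of_int z) = 0 \<and>
     (\<forall>z. pmf q z = pmf q (- z)) \<and>
     Gcd {n::nat. n \<ge> 1 \<and> pmf (conv_pow q n) 0 > 0} = 1 \<and>
     int_subgroup_gen (set_pmf q) = UNIV"

text \<open>E[X_{s_0} X_{s_1} ... X_{s_k} | S_0 = z] where s_0 = 0 and consecutive gaps are
  given by the list t (all gaps \<ge> 1, so times are distinct).  Conditionally on S the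
  coins are independent with E[X_n | S] = theta(S_n), so the conditional expectation
  given S is the product of theta(S_{s_j}); averaging over the walk via the Markov
  property gives the recursion below.\<close>
fun coin_corr :: "int pmf \<Rightarrow> (int \<Rightarrow> real) \<Rightarrow> int \<Rightarrow> nat list \<Rightarrow> real" where
  "coin_corr q \<theta> z [] = \<theta> z"
| "coin_corr q \<theta> z (t # ts) =
     \<theta> z * measure_pmf.expectation (walk_at q z t) (\<lambda>y. coin_corr q \<theta> y ts)"

definition p_theta :: "int pmf \<Rightarrow> (int \<Rightarrow> real) \<Rightarrow> nat list \<Rightarrow> real" where
  "p_theta q \<theta> t = (\<Sum>\<^sub>\<infinity>z\<in>UNIV. coin_corr q \<theta> z t)"

end

theory Submission
  imports Defs
begin

text \<open>If \<open>\<theta>\<close> vanishes outside an interval of length \<open>\<ell>\<close>, every correlation \<open>p_theta q \<theta> t\<close>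
  is a multilinear form in the step laws \<open>P(S\<^sub>n = \<cdot>)\<close> restricted to \<open>{-\<ell>..\<ell>}\<close>, so equality
  of all correlations extends to the linear span of these kernels. By Fourier inversion,
  \<open>\<pi> P(S\<^sub>n = d)\<close> is the integral over \<open>[0, \<pi>]\<close> of \<open>\<phi>(x)\<^sup>n cos(d x)\<close>, where \<open>\<phi>\<close> is the
  characteristic function of a step. A cosine polynomial \<open>g(x) = \<Sum>\<^sub>d c\<^sub>d cos(d x)\<close>
  orthogonal to all \<open>\<phi>\<^sup>n\<close>, \<open>n \<ge> 1\<close>, is orthogonal to all powers of \<open>\<psi> = (\<phi> + \<phi>\<^sup>2)/2\<close>;
  Laplace's method at \<open>x = 0\<close> then kills its Taylor coefficients one by one, and a
  Vandermonde argument gives \<open>g = 0\<close>. Hence the span contains the kernels \<open>j \<mapsto> [\<bar>j\<bar> = d]\<close>.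
  For these kernels the correlations for \<open>(\<ell>)\<close>, \<open>(\<ell>, i)\<close> and \<open>(j, \<ell>, i)\<close> compute
  \<open>\<theta>(a) \<theta>(b)\<close>, the sums \<open>\<theta>(a + i) + \<theta>(b - i)\<close> and the symmetrised products
  \<open>\<theta>(a + j) \<theta>(b - i) + \<theta>(b - j) \<theta>(a + i)\<close>; these determine the pair of sequences
  \<open>\<theta>(a + i)\<close>, \<open>\<theta>(b - i)\<close> up to a swap, i.e. the profile of \<open>\<theta>\<close> up to reversal.\<close>

section \<open>Symmetric random walks\<close>

lemma expectation_bind_pmf:
  fixes f :: "'b \<Rightarrow> real"
  assumes "\<And>x. \<bar>f x\<bar> \<le> B"
  shows "measure_pmf.expectation (bind_pmf p N) f
       = measure_pmf.expectation p (\<lambda>x. measure_pmf.expectation (N x) f)"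
  unfolding measure_pmf_bind
  by (rule integral_bind[where K="count_space UNIV" and B=B and B'=1])
     (use assms in \<open>auto simp: measure_pmf.emeasure_space_1 prob_space_imp_subprob_space
                                measure_pmf_in_subprob_algebra\<close>)

lemma pmf_map_uminus: "pmf (map_pmf uminus p) z = pmf p (- z :: 'a :: group_add)"
  by (metis inj_def minus_minus neg_equal_iff_equal pmf_map_inj')

lemma map_pmf_uminus_eq_iff: "map_pmf uminus p = p \<longleftrightarrow> (\<forall>z. pmf p z = pmf p (- z :: 'a :: group_add))"
  by (metis pmf_eqI pmf_map_uminus)

lemma map_pmf_uminus_conv_pow:
  assumes sym: "map_pmf uminus q = q"
  shows "map_pmf uminus (conv_pow q n) = conv_pow q n"
proof (induction n)
  case (Suc n)
  have "map_pmf uminus (conv_pow q (Suc n))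
      = bind_pmf (conv_pow q n) (\<lambda>x. map_pmf (\<lambda>y. - x + y) (map_pmf uminus q))"
    by (simp add: map_bind_pmf map_pmf_comp, intro bind_pmf_cong map_pmf_cong) auto
  also have "\<dots> = bind_pmf (map_pmf uminus (conv_pow q n)) (\<lambda>x. map_pmf (\<lambda>y. x + y) q)"
    by (simp add: sym bind_map_pmf, intro bind_pmf_cong map_pmf_cong) auto
  finally show ?case using Suc by simp
qed simp

lemma pmf_conv_pow_uminus:
  assumes "map_pmf uminus q = q"
  shows "pmf (conv_pow q n) (- z) = pmf (conv_pow q n) z"
  by (metis assms map_pmf_uminus_conv_pow pmf_map_uminus)

section \<open>Correlations as multilinear forms in the step kernels\<close>

text \<open>\<open>coin_corr\<close> with the step laws replaced by arbitrary kernels, summed over the window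
  \<open>{-L..L}\<close> only; what matters is that it is multilinear in the kernels.\<close>

fun kernel_corr :: "(int \<Rightarrow> real) \<Rightarrow> int \<Rightarrow> (int \<Rightarrow> real) list \<Rightarrow> int \<Rightarrow> real" where
  "kernel_corr \<theta> L [] z = \<theta> z"
| "kernel_corr \<theta> L (k # ks) z = \<theta> z * (\<Sum>j\<in>{-L..L}. k j * kernel_corr \<theta> L ks (z + j))"

definition kernel_corr_sum :: "(int \<Rightarrow> real) \<Rightarrow> int \<Rightarrow> (int \<Rightarrow> real) list \<Rightarrow> real" where
  "kernel_corr_sum \<theta> L ks = (\<Sum>z\<in>{z. \<theta> z \<noteq> 0}. kernel_corr \<theta> L ks z)"

definition support_width_le :: "(int \<Rightarrow> real) \<Rightarrow> int \<Rightarrow> bool" where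
  "support_width_le \<theta> L \<longleftrightarrow> (\<forall>z w. \<theta> z \<noteq> 0 \<longrightarrow> \<theta> w \<noteq> 0 \<longrightarrow> \<bar>z - w\<bar> \<le> L)"

lemma kernel_corr_zero: "\<theta> z = 0 \<Longrightarrow> kernel_corr \<theta> L ks z = 0"
  by (cases ks) auto

lemma coin_corr_zero: "\<theta> z = 0 \<Longrightarrow> coin_corr q \<theta> z ts = 0"
  by (cases ts) auto

lemma coin_corr_eq_kernel_corr:
  assumes "support_width_le \<theta> L"
  shows "coin_corr q \<theta> z ts = kernel_corr \<theta> L (map (\<lambda>t. pmf (conv_pow q t)) ts) z"
proof (induction ts arbitrary: z)
  case (Cons t ts)
  show ?case
  proof (cases "\<theta> z = 0")
    case False
    have "measure_pmf.expectation (walk_at q z t) (\<lambda>y. coin_corr q \<theta> y ts)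
        = measure_pmf.expectation (conv_pow q t) (\<lambda>y. coin_corr q \<theta> (z + y) ts)"
      by (simp add: walk_at_def)
    also have "\<dots> = (\<Sum>j\<in>{-L..L}. coin_corr q \<theta> (z + j) ts * pmf (conv_pow q t) j)"
    proof (rule integral_measure_pmf_real)
      fix j assume "coin_corr q \<theta> (z + j) ts \<noteq> 0"
      then have "\<theta> (z + j) \<noteq> 0" using coin_corr_zero by metis
      then show "j \<in> {-L..L}" using assms False unfolding support_width_le_def by force
    qed simp
    finally show ?thesis using Cons by (simp add: mult.commute)
  qed (simp add: coin_corr_zero kernel_corr_zero)
qed simp

lemma p_theta_eq_kernel_corr_sum:
  assumes "support_width_le \<theta> L" "finite {z. \<theta> z \<noteq> 0}"
  shows "p_theta q \<theta> ts = kernel_corr_sum \<theta> L (map (\<lambda>t. pmf (conv_pow q t)) ts)"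
proof -
  have "p_theta q \<theta> ts = (\<Sum>\<^sub>\<infinity>z\<in>{z. \<theta> z \<noteq> 0}. coin_corr q \<theta> z ts)"
    unfolding p_theta_def by (rule infsum_cong_neutral) (auto simp: coin_corr_zero)
  then show ?thesis
    using assms by (simp add: kernel_corr_sum_def coin_corr_eq_kernel_corr)
qed

lemma kernel_corr_sum_linear:
  "kernel_corr_sum \<theta> L (fs @ (\<lambda>j. a * k1 j + b * k2 j) # gs)
    = a * kernel_corr_sum \<theta> L (fs @ k1 # gs) + b * kernel_corr_sum \<theta> L (fs @ k2 # gs)"
proof -
  have "kernel_corr \<theta> L (fs @ (\<lambda>j. a * k1 j + b * k2 j) # gs) z
    = a * kernel_corr \<theta> L (fs @ k1 # gs) z + b * kernel_corr \<theta> L (fs @ k2 # gs) z" for z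
    by (induction fs arbitrary: z) (simp_all add: sum.distrib sum_distrib_left algebra_simps)
  then show ?thesis
    unfolding kernel_corr_sum_def by (simp add: sum.distrib sum_distrib_left)
qed

lemma kernel_corr_sum_cong:
  assumes "list_all2 (\<lambda>k k'. \<forall>j\<in>{-L..L}. k j = k' j) ks ks'"
  shows "kernel_corr_sum \<theta> L ks = kernel_corr_sum \<theta> L ks'"
proof -
  have "kernel_corr \<theta> L ks z = kernel_corr \<theta> L ks' z" for z
    using assms by (induction ks ks' arbitrary: z rule: list_all2_induct) (auto intro!: sum.cong)
  then show ?thesis
    unfolding kernel_corr_sum_def by simp
qed

inductive_set lin_span :: "('a \<Rightarrow> real) set \<Rightarrow> ('a \<Rightarrow> real) set" for V where
  base: "v \<in> V \<Longrightarrow> v \<in> lin_span V"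
| lin: "u \<in> lin_span V \<Longrightarrow> w \<in> lin_span V \<Longrightarrow> (\<lambda>i. a * u i + b * w i) \<in> lin_span V"

lemma lin_span_precompose:
  "u \<in> lin_span V \<Longrightarrow> (\<lambda>j. u (h j)) \<in> lin_span ((\<lambda>v j. v (h j)) ` V)"
  by (induction rule: lin_span.induct) (auto intro: lin_span.intros)

lemma kernel_corr_sum_eq_lin_span:
  assumes eq: "\<And>ks. ks \<noteq> [] \<Longrightarrow> set ks \<subseteq> V \<Longrightarrow> kernel_corr_sum \<theta> L ks = kernel_corr_sum \<theta>' L' ks"
    and ks: "ks \<noteq> []" "set ks \<subseteq> lin_span V"
  shows "kernel_corr_sum \<theta> L ks = kernel_corr_sum \<theta>' L' ks"
proof -
  have "kernel_corr_sum \<theta> L (fs @ gs) = kernel_corr_sum \<theta>' L' (fs @ gs)"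
    if "set fs \<subseteq> V" "set gs \<subseteq> lin_span V" "fs @ gs \<noteq> []" for fs gs
    using that
  proof (induction gs arbitrary: fs)
    case (Cons g gs)
    have "g \<in> lin_span V" using Cons.prems by simp
    then show ?case
    proof (induction rule: lin_span.induct)
      case (base v)
      then show ?case using Cons.IH[of "fs @ [v]"] Cons.prems by simp
    qed (simp add: kernel_corr_sum_linear)
  qed (use eq in simp)
  from this[of "[]"] ks show ?thesis by simp
qed

section \<open>The characteristic function\<close>

lemma integrable_measure_pmf_bounded:
  fixes f :: "'a \<Rightarrow> real"
  assumes "\<And>z. \<bar>f z\<bar> \<le> B"
  shows "integrable (measure_pmf p) f"
  by (rule measure_pmf.integrable_const_bound[where B=B]) (use assms in auto)

lemma integrable_indicator_Icc_continuous:
  fixes f :: "real \<Rightarrow> real"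
  assumes "continuous_on {a..b} f"
  shows "integrable lborel (\<lambda>x. indicator {a..b} x * f x)"
  using borel_integrable_atLeastAtMost'[OF assms] by (simp add: set_integrable_def)

definition char_fun :: "int pmf \<Rightarrow> real \<Rightarrow> real" where
  "char_fun q x = measure_pmf.expectation q (\<lambda>z. cos (of_int z * x))"

lemma expectation_sin_symmetric:
  assumes sym: "map_pmf uminus q = q"
  shows "measure_pmf.expectation q (\<lambda>z. sin (of_int z * x)) = (0::real)"
proof -
  have "measure_pmf.expectation q (\<lambda>z. sin (of_int z * x))
      = measure_pmf.expectation (map_pmf uminus q) (\<lambda>z. sin (of_int z * x))"
    using sym by simp
  then show ?thesis by simp
qed

lemma expectation_cos_conv_pow:
  assumes sym: "map_pmf uminus q = q"
  shows "measure_pmf.expectation (conv_pow q n) (\<lambda>z. cos (of_int z * x)) = char_fun q x ^ n"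
proof (induction n)
  case (Suc n)
  have step: "measure_pmf.expectation (map_pmf (\<lambda>y. a + y) q) (\<lambda>z. cos (of_int z * x))
      = cos (of_int a * x) * char_fun q x" for a
  proof -
    have "measure_pmf.expectation (map_pmf (\<lambda>y. a + y) q) (\<lambda>z. cos (of_int z * x))
        = measure_pmf.expectation q (\<lambda>y. cos (of_int a * x) * cos (of_int y * x)
                                        - sin (of_int a * x) * sin (of_int y * x))"
      by (simp add: cos_add distrib_right)
    also have "\<dots> = cos (of_int a * x) * char_fun q x
                    - sin (of_int a * x) * measure_pmf.expectation q (\<lambda>y. sin (of_int y * x))"
      unfolding char_fun_def
      by (subst Bochner_Integration.integral_diff)
         (auto intro!: integrable_measure_pmf_bounded[where B=1] simp: abs_mult mult_le_one)
    finally show ?thesis using expectation_sin_symmetric[OF sym] by simp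
  qed
  have "measure_pmf.expectation (conv_pow q (Suc n)) (\<lambda>z. cos (of_int z * x))
     = measure_pmf.expectation (conv_pow q n)
         (\<lambda>a. measure_pmf.expectation (map_pmf (\<lambda>y. a + y) q) (\<lambda>z. cos (of_int z * x)))"
    by (simp only: conv_pow.simps) (rule expectation_bind_pmf[where B=1], simp)
  also have "\<dots> = measure_pmf.expectation (conv_pow q n) (\<lambda>a. cos (of_int a * x)) * char_fun q x"
    by (simp only: step integral_mult_left_zero)
  finally show ?case using Suc by simp
qed simp

lemma integral_cos_int_multiple:
  fixes m :: int
  shows "integral\<^sup>L lborel (\<lambda>x. indicator {0..pi} x * cos (of_int m * x)) = (if m = 0 then pi else 0)"
proof (cases "m = 0")
  case False
  have "integral\<^sup>L lborel (\<lambda>x. indicator {0..pi} x *\<^sub>R cos (of_int m * x))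
      = sin (of_int m * pi) / of_int m - sin (of_int m * 0) / of_int m"
    by (rule integral_FTC_atLeastAtMost)
       (use False in \<open>auto intro!: derivative_eq_intros continuous_intros
                        simp: has_real_derivative_iff_has_vector_derivative[symmetric]\<close>)
  moreover have "sin (of_int m * pi) = 0"
    by (simp add: sin_times_pi_eq_0 mult.commute)
  ultimately show ?thesis using False by simp
qed simp

lemma integral_cos_mult_cos:
  fixes z d :: int
  shows "integral\<^sup>L lborel (\<lambda>x. indicator {0..pi} x * (cos (of_int z * x) * cos (of_int d * x)))
     = pi / 2 * (indicator {d} z + indicator {-d} z)"
proof -
  have int: "integrable lborel (\<lambda>x. indicator {0..pi} x * cos (of_int m * x))" for m
    by (intro integrable_indicator_Icc_continuous continuous_intros)
  have "(\<lambda>x. indicator {0..pi} x * (cos (of_int z * x) * cos (of_int d * x)))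
      = (\<lambda>x. (indicator {0..pi} x * cos (of_int (z - d) * x)) / 2
           + (indicator {0..pi} x * cos (of_int (z + d) * x)) / 2)"
    by (rule ext)
       (simp add: cos_times_cos algebra_simps add_divide_distrib, metis cos_minus minus_diff_eq)
  then have "integral\<^sup>L lborel (\<lambda>x. indicator {0..pi} x * (cos (of_int z * x) * cos (of_int d * x)))
      = integral\<^sup>L lborel (\<lambda>x. indicator {0..pi} x * cos (of_int (z - d) * x)) / 2
        + integral\<^sup>L lborel (\<lambda>x. indicator {0..pi} x * cos (of_int (z + d) * x)) / 2"
    using int[of "z - d"] int[of "z + d"] by simp
  then show ?thesis
    unfolding integral_cos_int_multiple by (auto simp: indicator_def)
qed

lemma integrable_cos_mult_cos_pair:
  "integrable (measure_pmf p \<Otimes>\<^sub>M lborel)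
     (\<lambda>(z, x). indicator {0..pi} x * (cos (of_int z * x) * cos (of_int d * x)) :: real)"
proof -
  define f where
    "f z x = (indicator {0..pi} x * (cos (of_int z * x) * cos (of_int d * x)) :: real)" for z x
  interpret P: pair_sigma_finite "measure_pmf p" lborel
    by (intro pair_sigma_finite.intro measure_pmf.sigma_finite_measure_axioms
              lborel.sigma_finite_measure_axioms)
  have "case_prod f \<in> borel_measurable (count_space UNIV \<Otimes>\<^sub>M lborel)"
    by (rule measurable_pair_measure_countable1) (auto simp: f_def)
  moreover have "sets (measure_pmf p \<Otimes>\<^sub>M lborel) = sets (count_space UNIV \<Otimes>\<^sub>M lborel)"
    by (intro sets_pair_measure_cong sets_measure_pmf_count_space refl)
  ultimately have meas: "case_prod f \<in> borel_measurable (measure_pmf p \<Otimes>\<^sub>M lborel)"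
    using measurable_cong_sets by blast
  have int_f: "integrable lborel (f z)" for z
    unfolding f_def by (intro integrable_indicator_Icc_continuous continuous_intros)
  have int_1: "integrable lborel (\<lambda>x. indicator {0..pi} x :: real)"
    using integrable_indicator_Icc_continuous[of 0 pi "\<lambda>_. 1"] by simp
  have "integral\<^sup>L lborel (\<lambda>x. norm (f z x))
      \<le> integral\<^sup>L lborel (\<lambda>x. indicator {0..pi} x :: real)" for z
    by (intro integral_mono integrable_norm int_f int_1)
       (auto simp: f_def indicator_def abs_mult mult_le_one)
  then have "\<bar>integral\<^sup>L lborel (\<lambda>x. norm (f z x))\<bar> \<le> pi" for z
    by (simp add: integral_nonneg_AE)
  then have "integrable (measure_pmf p \<Otimes>\<^sub>M lborel) (case_prod f)"
    by (intro P.Fubini_integrable[OF meas]) (auto intro!: integrable_measure_pmf_bounded int_f)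
  moreover have "case_prod f
      = (\<lambda>(z, x). indicator {0..pi} x * (cos (of_int z * x) * cos (of_int d * x)) :: real)"
    by (simp add: f_def fun_eq_iff)
  ultimately show ?thesis
    by simp
qed

lemma integral_char_fun_power_cos:
  assumes sym: "map_pmf uminus q = q"
  shows "integral\<^sup>L lborel (\<lambda>x. indicator {0..pi} x * (char_fun q x ^ n * cos (of_int d * x)))
     = pi * pmf (conv_pow q n) d"
proof -
  let ?p = "conv_pow q n"
  interpret P: pair_sigma_finite "measure_pmf ?p" lborel
    by (intro pair_sigma_finite.intro measure_pmf.sigma_finite_measure_axioms
              lborel.sigma_finite_measure_axioms)
  have "integral\<^sup>L lborel (\<lambda>x. indicator {0..pi} x * (char_fun q x ^ n * cos (of_int d * x)))
      = integral\<^sup>L lborel (\<lambda>x. measure_pmf.expectation ?p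
          (\<lambda>z. indicator {0..pi} x * (cos (of_int z * x) * cos (of_int d * x))))"
    unfolding expectation_cos_conv_pow[OF sym, symmetric] by (simp add: mult.assoc)
  also have "\<dots> = measure_pmf.expectation ?p (\<lambda>z. integral\<^sup>L lborel
          (\<lambda>x. indicator {0..pi} x * (cos (of_int z * x) * cos (of_int d * x))))"
    using P.Fubini_integral[OF integrable_cos_mult_cos_pair] by simp
  also have "\<dots> = measure_pmf.expectation ?p (\<lambda>z. pi / 2 * (indicator {d} z + indicator {-d} z))"
    unfolding integral_cos_mult_cos ..
  also have "\<dots> = pi / 2 * (pmf ?p d + pmf ?p (-d))"
    by (simp add: measure_pmf_single Bochner_Integration.integral_add
                  integrable_measure_pmf_bounded[where B=1])
  also have "\<dots> = pi * pmf ?p d"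
    using pmf_conv_pow_uminus[OF sym, of n d] by simp
  finally show ?thesis .
qed

lemma char_fun_le_1: "char_fun q x \<le> 1"
  unfolding char_fun_def
  using integral_mono[of "measure_pmf q" "\<lambda>z. cos (of_int z * x)" "\<lambda>_. 1"]
  by (simp add: integrable_measure_pmf_bounded[where B=1])

lemma char_fun_ge_minus_1: "-1 \<le> char_fun q x"
  unfolding char_fun_def
  using integral_mono[of "measure_pmf q" "\<lambda>_. -1" "\<lambda>z. cos (of_int z * x)"]
  by (simp add: integrable_measure_pmf_bounded[where B=1])

lemma one_minus_square_half_le_cos: "1 - y\<^sup>2 / 2 \<le> cos (y::real)"
proof -
  have "\<bar>sin (y/2)\<bar>\<^sup>2 \<le> \<bar>y/2\<bar>\<^sup>2"
    by (rule power_mono[OF abs_sin_x_le_abs_x]) simp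
  then show ?thesis
    using cos_double_sin[of "y/2"] by (simp add: power_divide)
qed

lemma abs_cos_diff_le: "\<bar>cos a - cos b\<bar> \<le> \<bar>a - (b::real)\<bar>"
proof -
  have "\<bar>cos a - cos b\<bar> = 2 * \<bar>sin ((a + b) / 2)\<bar> * \<bar>sin ((b - a) / 2)\<bar>"
    by (simp add: cos_diff_cos abs_mult)
  also have "\<dots> \<le> 2 * 1 * \<bar>(b - a) / 2\<bar>"
    by (intro mult_mono abs_sin_x_le_abs_x) auto
  finally show ?thesis by simp
qed

lemma char_fun_lower_bound:
  assumes "integrable (measure_pmf q) (\<lambda>z. (real_of_int z)\<^sup>2)"
  shows "1 - measure_pmf.expectation q (\<lambda>z. (real_of_int z)\<^sup>2) * x\<^sup>2 / 2 \<le> char_fun q x"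
proof -
  have "measure_pmf.expectation q (\<lambda>z. 1 - (real_of_int z)\<^sup>2 * (x\<^sup>2 / 2)) \<le> char_fun q x"
    unfolding char_fun_def
    using assms one_minus_square_half_le_cos[of "real_of_int _ * x"]
    by (intro integral_mono)
       (auto intro: integrable_measure_pmf_bounded[where B=1] simp: power_mult_distrib)
  then show ?thesis
    using assms by (simp add: Bochner_Integration.integral_diff)
qed

lemma char_fun_lipschitz:
  assumes "integrable (measure_pmf q) (\<lambda>z. real_of_int z)"
  shows "(measure_pmf.expectation q (\<lambda>z. \<bar>real_of_int z\<bar>))-lipschitz_on S (char_fun q)"
proof (rule lipschitz_onI)
  fix x y
  have int_cos: "integrable (measure_pmf q) (\<lambda>z. cos (real_of_int z * w))" for w
    by (rule integrable_measure_pmf_bounded[where B=1]) auto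
  have "\<bar>char_fun q x - char_fun q y\<bar>
      = \<bar>measure_pmf.expectation q (\<lambda>z. cos (real_of_int z * x) - cos (real_of_int z * y))\<bar>"
    unfolding char_fun_def using int_cos by simp
  also have "\<dots> \<le> measure_pmf.expectation q (\<lambda>z. \<bar>cos (real_of_int z * x) - cos (real_of_int z * y)\<bar>)"
    using integral_norm_bound[of "measure_pmf q"] by simp
  also have "\<dots> \<le> measure_pmf.expectation q (\<lambda>z. \<bar>real_of_int z\<bar> * \<bar>x - y\<bar>)"
  proof (rule integral_mono)
    show "\<bar>cos (real_of_int z * x) - cos (real_of_int z * y)\<bar> \<le> \<bar>real_of_int z\<bar> * \<bar>x - y\<bar>" for z
      using abs_cos_diff_le[of "real_of_int z * x" "real_of_int z * y"]
      by (simp add: abs_mult right_diff_distrib[symmetric])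
  qed (use assms int_cos in auto)
  finally show "dist (char_fun q x) (char_fun q y)
      \<le> measure_pmf.expectation q (\<lambda>z. \<bar>real_of_int z\<bar>) * dist x y"
    by (simp add: dist_real_def)
qed (simp add: integral_nonneg_AE)

lemma continuous_on_char_fun:
  assumes "integrable (measure_pmf q) (\<lambda>z. real_of_int z)"
  shows "continuous_on S (char_fun q)"
  by (rule lipschitz_on_continuous_on[OF char_fun_lipschitz[OF assms]])

lemma char_fun_less_1:
  assumes gen: "int_subgroup_gen (set_pmf q) = UNIV" and x: "0 < x" "x < 2 * pi"
  shows "char_fun q x < 1"
proof (rule ccontr)
  assume "\<not> char_fun q x < 1"
  then have "measure_pmf.expectation q (\<lambda>z. 1 - cos (real_of_int z * x)) = 0"
    using char_fun_le_1[of q x] unfolding char_fun_def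
    by (simp add: Bochner_Integration.integral_diff integrable_measure_pmf_bounded[where B=1])
  then have "AE z in measure_pmf q. 1 - cos (real_of_int z * x) = 0"
    by (subst (asm) integral_nonneg_eq_0_iff_AE)
       (auto intro!: integrable_measure_pmf_bounded[where B=2] simp: abs_le_iff)
  then have cos_1: "cos (real_of_int z * x) = 1" if "z \<in> set_pmf q" for z
    using that by (simp add: AE_measure_pmf_iff)
  have "\<exists>n::int. real_of_int z * x = real_of_int n * 2 * pi"
    if "z \<in> int_subgroup_gen (set_pmf q)" for z
    using that
  proof (induction rule: int_subgroup_gen.induct)
    case (base z)
    then show ?case using cos_1 cos_one_2pi_int by blast
  next
    case (add z w)
    then obtain n m :: int where "real_of_int z * x = real_of_int n * 2 * pi"
      "real_of_int w * x = real_of_int m * 2 * pi"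
      by blast
    then show ?case by (intro exI[of _ "n + m"]) (simp add: algebra_simps)
  next
    case (neg z)
    then obtain n :: int where "real_of_int z * x = real_of_int n * 2 * pi"
      by blast
    then show ?case by (intro exI[of _ "- n"]) simp
  qed (intro exI[of _ 0], simp)
  from this[of 1] obtain n :: int where "x = real_of_int n * 2 * pi"
    using gen by auto
  with x have "0 < n" "n < 1"
    by (simp_all add: zero_less_mult_iff)
  then show False by simp
qed

text \<open>\<open>mixed_char_fun q\<close> is the characteristic function of the mixture of one and two steps
  of the walk. Unlike \<open>char_fun q\<close>, which may reach \<open>-1\<close> at \<open>pi\<close> for periodic walks, it
  stays above \<open>-1/8\<close>, so its modulus is bounded away from \<open>1\<close> away from the origin.\<close>

definition mixed_char_fun :: "int pmf \<Rightarrow> real \<Rightarrow> real" where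
  "mixed_char_fun q x = char_fun q x * (1 + char_fun q x) / 2"

lemma mixed_char_fun_ge: "-1/8 \<le> mixed_char_fun q x"
proof -
  have "0 \<le> (char_fun q x + 1/2)\<^sup>2" by simp
  then show ?thesis
    unfolding mixed_char_fun_def by (simp add: power2_eq_square algebra_simps)
qed

lemma mixed_char_fun_lower_bound:
  assumes "integrable (measure_pmf q) (\<lambda>z. (real_of_int z)\<^sup>2)"
  shows "1 - 3 / 4 * measure_pmf.expectation q (\<lambda>z. (real_of_int z)\<^sup>2) * x\<^sup>2 \<le> mixed_char_fun q x"
proof -
  define u where "u = 1 - char_fun q x"
  have "u \<le> measure_pmf.expectation q (\<lambda>z. (real_of_int z)\<^sup>2) * x\<^sup>2 / 2"
    unfolding u_def using char_fun_lower_bound[OF assms, of x] by simp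
  moreover have "mixed_char_fun q x = 1 - 3 * u / 2 + u\<^sup>2 / 2"
    unfolding mixed_char_fun_def u_def by (simp add: power2_eq_square field_simps)
  ultimately have "1 - 3 / 2 * (measure_pmf.expectation q (\<lambda>z. (real_of_int z)\<^sup>2) * x\<^sup>2 / 2)
      \<le> mixed_char_fun q x"
    using zero_le_power2[of u] by linarith
  then show ?thesis by simp
qed

lemma mixed_char_fun_bounded_away:
  assumes gen: "int_subgroup_gen (set_pmf q) = UNIV"
    and int: "integrable (measure_pmf q) (\<lambda>z. real_of_int z)"
    and \<eta>: "0 < \<eta>"
  shows "\<exists>\<rho><1. \<forall>x. \<eta> \<le> x \<longrightarrow> x \<le> pi \<longrightarrow> \<bar>mixed_char_fun q x\<bar> \<le> \<rho>"
proof (cases "\<eta> \<le> pi")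
  case True
  have "continuous_on {\<eta>..pi} (mixed_char_fun q)"
    unfolding mixed_char_fun_def by (intro continuous_intros continuous_on_char_fun[OF int]) auto
  then obtain x0 where x0: "x0 \<in> {\<eta>..pi}" "\<And>x. x \<in> {\<eta>..pi} \<Longrightarrow> mixed_char_fun q x \<le> mixed_char_fun q x0"
    using continuous_attains_sup[OF compact_Icc] True by (metis atLeastAtMost_iff empty_iff order.refl)
  have "char_fun q x0 < 1"
    using char_fun_less_1[OF gen] x0(1) \<eta> by auto
  then have "0 < (1 - char_fun q x0) * (2 + char_fun q x0)"
    using char_fun_ge_minus_1[of q x0] by (intro mult_pos_pos) auto
  then have "mixed_char_fun q x0 < 1"
    unfolding mixed_char_fun_def by (simp add: algebra_simps)
  moreover have "\<bar>mixed_char_fun q x\<bar> \<le> max (mixed_char_fun q x0) (1/8)" if "\<eta> \<le> x" "x \<le> pi" for x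
    using x0(2)[of x] mixed_char_fun_ge[of q x] that by (auto simp: max_def abs_if)
  ultimately show ?thesis
    by (intro exI[of _ "max (mixed_char_fun q x0) (1/8)"]) auto
qed (auto intro: exI[of _ 0])

section \<open>Laplace's method\<close>

lemma integral_power_Icc:
  assumes "0 \<le> r"
  shows "integral\<^sup>L lborel (\<lambda>x. indicator {0..r} x * x ^ k) = r ^ (k + 1) / real (k + 1)"
proof -
  have "((\<lambda>x. x ^ (k + 1) / real (k + 1)) has_vector_derivative x ^ k) (at x within {0..r})"
    for x :: real
    using DERIV_cdivide[OF DERIV_pow[of "k + 1" x], of "real (k + 1)"]
    by (simp add: has_field_derivative_at_within
             flip: has_real_derivative_iff_has_vector_derivative)
  then have "integral\<^sup>L lborel (\<lambda>x. indicator {0..r} x *\<^sub>R x ^ k)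
      = r ^ (k + 1) / real (k + 1) - 0 ^ (k + 1) / real (k + 1)"
    by (intro integral_FTC_atLeastAtMost continuous_intros) (use assms in auto)
  then show ?thesis by simp
qed

lemma LIMSEQ_power_times_geometric:
  fixes \<rho> :: real
  assumes "0 \<le> \<rho>" "\<rho> < 1"
  shows "(\<lambda>s. real s ^ k * \<rho> ^ s) \<longlonglongrightarrow> 0"
proof (cases "k = 0")
  case True
  then show ?thesis using assms by (simp add: LIMSEQ_power_zero)
next
  case False
  define \<rho>' where "\<rho>' = root k \<rho>"
  have "0 \<le> \<rho>'" "\<rho>' < 1" "\<rho>' ^ k = \<rho>"
    using assms False unfolding \<rho>'_def by (auto simp: real_root_lt_1_iff real_root_pow_pos2)
  then have "(\<lambda>s. (real s * \<rho>' ^ s) ^ k) \<longlonglongrightarrow> 0 ^ k"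
    by (intro tendsto_power powser_times_n_limit_0) auto
  moreover have "(real s * \<rho>' ^ s) ^ k = real s ^ k * \<rho> ^ s" for s
    by (simp add: power_mult_distrib \<open>\<rho>' ^ k = \<rho>\<close>[symmetric] power_mult[symmetric] mult.commute)
  ultimately show ?thesis
    using False by (simp add: power_0_left)
qed

lemma laplace_integrand_lower_bound:
  fixes g \<psi> :: "real \<Rightarrow> real" and t :: nat
  assumes r: "0 < r" "r \<le> \<eta>" "\<eta> \<le> pi"
    and near: "\<And>x. 0 \<le> x \<Longrightarrow> x \<le> \<eta> \<Longrightarrow> c * x ^ k \<le> g x \<and> 1 - C * x\<^sup>2 \<le> \<psi> x \<and> C * x\<^sup>2 \<le> 1"
    and far: "\<And>x. \<eta> < x \<Longrightarrow> x \<le> pi \<Longrightarrow> \<bar>\<psi> x\<bar> \<le> \<rho>"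
    and G: "\<And>x. 0 \<le> x \<Longrightarrow> x \<le> pi \<Longrightarrow> \<bar>g x\<bar> \<le> G"
    and nonneg: "0 \<le> c" "0 \<le> C" "0 \<le> G" "0 \<le> \<rho>"
    and t: "C * r\<^sup>2 * t \<le> 1/2"
  shows "c / 2 * (indicator {0..r} x * x ^ k) - G * \<rho> ^ t * indicator {0..pi} x
       \<le> indicator {0..pi} x * (g x * \<psi> x ^ t)"
proof -
  have "0 \<le> G * \<rho> ^ t"
    using nonneg by simp
  consider "x < 0 \<or> pi < x" | "0 \<le> x" "x \<le> r" | "r < x" "x \<le> \<eta>" | "\<eta> < x" "x \<le> pi"
    by linarith
  then show ?thesis
  proof cases
    case 2
    then have "0 \<le> 1 - C * x\<^sup>2" "1 - C * x\<^sup>2 \<le> \<psi> x" and g: "c * x ^ k \<le> g x"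
      using near[of x] r by auto
    moreover have "C * x\<^sup>2 * t \<le> 1/2"
      using 2 t nonneg by (smt (verit) mult_right_mono power_mono mult_left_mono of_nat_0_le_iff)
    ultimately have "1/2 \<le> \<psi> x ^ t"
      using Bernoulli_inequality[of "- (C * x\<^sup>2)" t] power_mono[of "1 - C * x\<^sup>2" "\<psi> x" t]
      by (simp add: algebra_simps)
    moreover have "0 \<le> c * x ^ k"
      using 2 nonneg by simp
    ultimately have "c * x ^ k * (1/2) \<le> g x * \<psi> x ^ t"
      using g by (intro mult_mono) auto
    then show ?thesis
      using 2 r \<open>0 \<le> G * \<rho> ^ t\<close> by (simp add: indicator_def)
  next
    case 3
    then have "0 \<le> g x * \<psi> x ^ t"
      using near[of x] r nonneg by (smt (verit) zero_le_mult_iff zero_le_power)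
    then show ?thesis
      using 3 r \<open>0 \<le> G * \<rho> ^ t\<close> by (simp add: indicator_def)
  next
    case 4
    then have "\<bar>g x * \<psi> x ^ t\<bar> \<le> G * \<rho> ^ t"
      using G[of x] far[of x] r unfolding abs_mult power_abs
      by (intro mult_mono power_mono) auto
    then show ?thesis
      using 4 r by (simp add: indicator_def)
  qed (use r in \<open>auto simp: indicator_def\<close>)
qed

lemma laplace_lower_bound:
  fixes g \<psi> :: "real \<Rightarrow> real" and t :: nat
  assumes cont: "continuous_on {0..pi} g" "continuous_on {0..pi} \<psi>"
    and r: "0 < r" "r \<le> \<eta>" "\<eta> \<le> pi"
    and near: "\<And>x. 0 \<le> x \<Longrightarrow> x \<le> \<eta> \<Longrightarrow> c * x ^ k \<le> g x \<and> 1 - C * x\<^sup>2 \<le> \<psi> x \<and> C * x\<^sup>2 \<le> 1"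
    and far: "\<And>x. \<eta> < x \<Longrightarrow> x \<le> pi \<Longrightarrow> \<bar>\<psi> x\<bar> \<le> \<rho>"
    and G: "\<And>x. 0 \<le> x \<Longrightarrow> x \<le> pi \<Longrightarrow> \<bar>g x\<bar> \<le> G"
    and nonneg: "0 \<le> c" "0 \<le> C" "0 \<le> G" "0 \<le> \<rho>"
    and t: "C * r\<^sup>2 * t \<le> 1/2"
  shows "c / 2 * (r ^ (k + 1) / (k + 1)) - pi * G * \<rho> ^ t
       \<le> integral\<^sup>L lborel (\<lambda>x. indicator {0..pi} x * (g x * \<psi> x ^ t))"
proof -
  have int_pow: "integrable lborel (\<lambda>x. indicator {0..r} x * x ^ k)"
    by (intro integrable_indicator_Icc_continuous continuous_intros)
  have int_1: "integrable lborel (\<lambda>x. indicator {0..pi} x :: real)"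
    using integrable_indicator_Icc_continuous[of 0 pi "\<lambda>_. 1"] by simp
  have "c / 2 * (r ^ (k + 1) / (k + 1)) - pi * G * \<rho> ^ t
      = integral\<^sup>L lborel
          (\<lambda>x. c / 2 * (indicator {0..r} x * x ^ k) - G * \<rho> ^ t * indicator {0..pi} x)"
    using int_pow int_1 integral_power_Icc[of r k] r by simp
  also have "\<dots> \<le> integral\<^sup>L lborel (\<lambda>x. indicator {0..pi} x * (g x * \<psi> x ^ t))"
    using int_pow int_1 laplace_integrand_lower_bound[OF r near far G nonneg t]
    by (intro integral_mono integrable_indicator_Icc_continuous continuous_intros cont) auto
  finally show ?thesis .
qed

text \<open>With \<open>t = s\<^sup>2\<close> and \<open>r\<close> of order \<open>1/s\<close>, the lower bound of \<open>laplace_lower_bound\<close> is of order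
  \<open>s ^ -(k+1)\<close> while the error term decays geometrically in \<open>s\<close>.\<close>

lemma laplace_integral_nonzero:
  fixes g \<psi> :: "real \<Rightarrow> real"
  assumes cont: "continuous_on {0..pi} g" "continuous_on {0..pi} \<psi>"
    and near: "\<And>x. 0 \<le> x \<Longrightarrow> x \<le> \<eta> \<Longrightarrow> c * x ^ k \<le> g x \<and> 1 - C * x\<^sup>2 \<le> \<psi> x \<and> C * x\<^sup>2 \<le> 1"
    and far: "\<And>x. \<eta> < x \<Longrightarrow> x \<le> pi \<Longrightarrow> \<bar>\<psi> x\<bar> \<le> \<rho>"
    and pos: "0 < c" "0 \<le> C" "0 \<le> \<rho>" "\<rho> < 1" "0 < \<eta>" "\<eta> \<le> pi"
  shows "\<exists>t\<ge>1. integral\<^sup>L lborel (\<lambda>x. indicator {0..pi} x * (g x * \<psi> x ^ t)) \<noteq> 0"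
proof (rule ccontr)
  assume "\<not> ?thesis"
  then have orth: "integral\<^sup>L lborel (\<lambda>x. indicator {0..pi} x * (g x * \<psi> x ^ t)) = 0" if "t \<ge> 1" for t
    using that by blast
  obtain G where G: "0 \<le> G" "\<And>x. x \<in> {0..pi} \<Longrightarrow> norm (g x) \<le> G"
    using continuous_on_compact_bound[OF compact_Icc cont(1)] by blast
  define K where "K = sqrt (2 * C + 1)"
  have K: "0 < K" "C / K\<^sup>2 \<le> 1/2"
    using pos by (auto simp: K_def field_simps)
  define c' where "c' = c / 2 / (k + 1) / K ^ (k + 1)"
  have "0 < c'" using pos K by (simp add: c'_def)
  have "c' \<le> pi * G * (real s ^ (k + 1) * \<rho> ^ s)" if s: "1 / (K * \<eta>) \<le> s" "1 \<le> s" for s :: nat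
  proof -
    define r where "r = 1 / (K * s)"
    have r: "0 < r" "r \<le> \<eta>" "C * r\<^sup>2 * real (s\<^sup>2) \<le> 1/2"
      using s K pos by (auto simp: r_def field_simps power2_eq_square)
    have "c / 2 * (r ^ (k + 1) / (k + 1)) - pi * G * \<rho> ^ (s\<^sup>2) \<le> 0"
      using laplace_lower_bound[OF cont r(1,2) pos(6) near far _ _ _ G(1) pos(3) r(3)]
        G(2) pos orth[of "s\<^sup>2"] s
      by simp
    then have "c' / real s ^ (k + 1) \<le> pi * G * \<rho> ^ (s\<^sup>2)"
      by (simp add: c'_def r_def power_divide power_mult_distrib field_simps)
    also have "\<dots> \<le> pi * G * \<rho> ^ s"
      using pos G(1) by (intro mult_left_mono power_decreasing) (auto simp: power2_eq_square)
    finally show ?thesis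
      using s by (simp add: field_simps)
  qed
  then have "eventually (\<lambda>s. c' \<le> pi * G * (real s ^ (k + 1) * \<rho> ^ s)) sequentially"
  proof (rule eventually_sequentiallyI)
    fix s assume "nat \<lceil>1 / (K * \<eta>)\<rceil> + 1 \<le> s"
    then show "1 / (K * \<eta>) \<le> real s" "1 \<le> s"
      by linarith+
  qed
  moreover have "(\<lambda>s. pi * G * (real s ^ (k + 1) * \<rho> ^ s)) \<longlonglongrightarrow> pi * G * 0"
    by (intro tendsto_mult_left LIMSEQ_power_times_geometric pos(3,4))
  ultimately have "c' \<le> 0"
    by (simp add: tendsto_lowerbound)
  with \<open>0 < c'\<close> show False by simp
qed

lemma taylor_positive_near_zero:
  fixes g \<psi> :: "real \<Rightarrow> real"
  assumes taylor: "\<And>x. 0 \<le> x \<Longrightarrow> x \<le> pi \<Longrightarrow> \<bar>g x - \<kappa> * x ^ k\<bar> \<le> B * x ^ (k + 2)"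
    and near: "\<And>x. 0 \<le> x \<Longrightarrow> x \<le> pi \<Longrightarrow> 1 - C * x\<^sup>2 \<le> \<psi> x"
    and "0 < \<kappa>" "0 \<le> C"
  obtains \<eta> where "0 < \<eta>" "\<eta> \<le> pi"
    "\<And>x. 0 \<le> x \<Longrightarrow> x \<le> \<eta> \<Longrightarrow> \<kappa> / 2 * x ^ k \<le> g x \<and> 1 - C * x\<^sup>2 \<le> \<psi> x \<and> C * x\<^sup>2 \<le> 1"
proof -
  have "((\<lambda>\<eta>. C * \<eta>\<^sup>2) \<longlongrightarrow> 0) (at_right 0)" "((\<lambda>\<eta>. \<bar>B\<bar> * \<eta>\<^sup>2) \<longlongrightarrow> 0) (at_right 0)"
    "((\<lambda>\<eta>. \<eta>) \<longlongrightarrow> 0) (at_right (0::real))"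
    by (auto intro!: tendsto_eq_intros)
  then have "eventually (\<lambda>\<eta>. C * \<eta>\<^sup>2 < 1 \<and> \<bar>B\<bar> * \<eta>\<^sup>2 < \<kappa> / 2 \<and> \<eta> < pi) (at_right 0)"
    using \<open>0 < \<kappa>\<close> by (intro eventually_conj order_tendstoD(2)) auto
  then obtain b where "0 < b" "\<forall>y>0. y < b \<longrightarrow> C * y\<^sup>2 < 1 \<and> \<bar>B\<bar> * y\<^sup>2 < \<kappa> / 2 \<and> y < pi"
    unfolding eventually_at_right_field by blast
  then obtain \<eta> where \<eta>: "0 < \<eta>" "C * \<eta>\<^sup>2 \<le> 1" "\<bar>B\<bar> * \<eta>\<^sup>2 \<le> \<kappa> / 2" "\<eta> \<le> pi"
    using field_lbound_gt_zero[of b b] by (smt (verit))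
  have "\<kappa> / 2 * x ^ k \<le> g x \<and> 1 - C * x\<^sup>2 \<le> \<psi> x \<and> C * x\<^sup>2 \<le> 1" if x: "0 \<le> x" "x \<le> \<eta>" for x
  proof -
    have x2: "x\<^sup>2 \<le> \<eta>\<^sup>2"
      using x by (intro power_mono) auto
    have "\<kappa> * x ^ k - g x \<le> \<bar>B\<bar> * x\<^sup>2 * x ^ k"
      using taylor[of x] x \<eta>(4) abs_ge_self[of B] mult_right_mono[of B "\<bar>B\<bar>" "x ^ (k + 2)"]
      by (simp add: power_add power2_eq_square mult_ac)
    moreover have "\<bar>B\<bar> * x\<^sup>2 \<le> \<kappa> / 2"
      using mult_left_mono[OF x2, of "\<bar>B\<bar>"] \<eta>(3) by simp
    then have "\<bar>B\<bar> * x\<^sup>2 * x ^ k \<le> \<kappa> / 2 * x ^ k"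
      using x by (intro mult_right_mono) auto
    moreover have "C * x\<^sup>2 \<le> 1"
      using x2 \<eta>(2) \<open>0 \<le> C\<close> by (meson mult_left_mono order_trans)
    ultimately show ?thesis
      using near[of x] x \<eta>(4) by auto
  qed
  then show ?thesis
    using that \<eta>(1,4) by blast
qed

lemma laplace_leading_coeff_zero:
  fixes g \<psi> :: "real \<Rightarrow> real"
  assumes cont: "continuous_on {0..pi} g" "continuous_on {0..pi} \<psi>"
    and orth: "\<And>t. t \<ge> 1 \<Longrightarrow> integral\<^sup>L lborel (\<lambda>x. indicator {0..pi} x * (g x * \<psi> x ^ t)) = 0"
    and taylor: "\<And>x. 0 \<le> x \<Longrightarrow> x \<le> pi \<Longrightarrow> \<bar>g x - \<kappa> * x ^ k\<bar> \<le> B * x ^ (k + 2)"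
    and near: "\<And>x. 0 \<le> x \<Longrightarrow> x \<le> pi \<Longrightarrow> 1 - C * x\<^sup>2 \<le> \<psi> x" and "0 \<le> C"
    and far: "\<And>\<eta>. 0 < \<eta> \<Longrightarrow> \<exists>\<rho><1. \<forall>x. \<eta> \<le> x \<longrightarrow> x \<le> pi \<longrightarrow> \<bar>\<psi> x\<bar> \<le> \<rho>"
  shows "\<kappa> = 0"
proof (rule ccontr)
  assume "\<kappa> \<noteq> 0"
  define \<sigma> where "\<sigma> = sgn \<kappa>"
  have \<sigma>: "\<sigma> * \<kappa> = \<bar>\<kappa>\<bar>" "\<bar>\<sigma>\<bar> = 1"
    using \<open>\<kappa> \<noteq> 0\<close> by (auto simp: \<sigma>_def sgn_if)
  have taylor': "\<bar>\<sigma> * g x - \<bar>\<kappa>\<bar> * x ^ k\<bar> \<le> B * x ^ (k + 2)" if "0 \<le> x" "x \<le> pi" for x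
  proof -
    have "\<bar>\<sigma> * g x - \<bar>\<kappa>\<bar> * x ^ k\<bar> = \<bar>\<sigma>\<bar> * \<bar>g x - \<kappa> * x ^ k\<bar>"
      by (simp flip: \<sigma>(1) abs_mult add: right_diff_distrib mult.assoc)
    then show ?thesis
      using taylor[OF that] \<sigma>(2) by simp
  qed
  obtain \<eta> where \<eta>: "0 < \<eta>" "\<eta> \<le> pi"
    "\<And>x. 0 \<le> x \<Longrightarrow> x \<le> \<eta> \<Longrightarrow> \<bar>\<kappa>\<bar> / 2 * x ^ k \<le> \<sigma> * g x \<and> 1 - C * x\<^sup>2 \<le> \<psi> x \<and> C * x\<^sup>2 \<le> 1"
    by (rule taylor_positive_near_zero[OF taylor' near _ \<open>0 \<le> C\<close>]) (use \<open>\<kappa> \<noteq> 0\<close> in auto)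
  obtain \<rho> where \<rho>: "\<rho> < 1" "\<And>x. \<eta> \<le> x \<Longrightarrow> x \<le> pi \<Longrightarrow> \<bar>\<psi> x\<bar> \<le> \<rho>"
    using far[OF \<eta>(1)] by blast
  have far': "\<bar>\<psi> x\<bar> \<le> max \<rho> 0" if "\<eta> < x" "x \<le> pi" for x
    using \<rho>(2)[of x] that by (simp add: le_max_iff_disj)
  have cont': "continuous_on {0..pi} (\<lambda>x. \<sigma> * g x)"
    by (intro continuous_intros cont)
  have "\<exists>t\<ge>1. integral\<^sup>L lborel (\<lambda>x. indicator {0..pi} x * (\<sigma> * g x * \<psi> x ^ t)) \<noteq> 0"
    by (rule laplace_integral_nonzero[OF cont' cont(2) \<eta>(3) far' _ \<open>0 \<le> C\<close> _ _ \<eta>(1,2)])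
       (use \<rho>(1) \<open>\<kappa> \<noteq> 0\<close> in auto)
  then obtain t where "t \<ge> 1" "integral\<^sup>L lborel (\<lambda>x. indicator {0..pi} x * (\<sigma> * g x * \<psi> x ^ t)) \<noteq> 0"
    by blast
  moreover have "integral\<^sup>L lborel (\<lambda>x. indicator {0..pi} x * (\<sigma> * g x * \<psi> x ^ t))
      = \<sigma> * integral\<^sup>L lborel (\<lambda>x. indicator {0..pi} x * (g x * \<psi> x ^ t))"
    by (subst integral_mult_right_zero[symmetric]) (simp add: mult_ac)
  ultimately show False
    using orth by simp
qed

section \<open>Independence of the return probabilities\<close>

lemma abs_cos_minus_taylor_le:
  "\<bar>cos y - (\<Sum>k<n. cos_coeff k * y ^ k)\<bar> \<le> \<bar>y\<bar> ^ n / fact n"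
proof -
  obtain t where "cos y = (\<Sum>k<n. cos_coeff k * y ^ k) + cos (t + 1/2 * real n * pi) / fact n * y ^ n"
    using Maclaurin_cos_expansion[of y n] by blast
  moreover have "\<bar>cos (t + 1/2 * real n * pi)\<bar> * \<bar>y\<bar> ^ n / fact n \<le> 1 * \<bar>y\<bar> ^ n / fact n"
    by (intro divide_right_mono mult_right_mono) auto
  ultimately show ?thesis
    by (simp add: abs_mult power_abs)
qed

lemma cos_coeff_sum_vanishing_moments:
  fixes c :: "nat \<Rightarrow> real"
  assumes "\<forall>j<m. (\<Sum>d<N. c d * real d ^ (2*j)) = 0"
  shows "(\<Sum>k<2*m+2. cos_coeff k * x ^ k * (\<Sum>d<N. c d * real d ^ k))
       = (-1) ^ m / fact (2*m) * (\<Sum>d<N. c d * real d ^ (2*m)) * x ^ (2*m)"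
proof -
  have "cos_coeff k * (\<Sum>d<N. c d * real d ^ k) = 0" if "k < 2*m+2" "k \<noteq> 2*m" for k
  proof (cases "even k")
    case True
    with that assms show ?thesis by (auto elim!: evenE)
  qed (simp add: cos_coeff_def)
  then have "(\<Sum>k<2*m+2. cos_coeff k * x ^ k * (\<Sum>d<N. c d * real d ^ k))
      = (\<Sum>k<2*m+2. if k = 2*m then cos_coeff k * x ^ k * (\<Sum>d<N. c d * real d ^ k) else 0)"
    by (intro sum.cong) auto
  then show ?thesis
    by (simp add: cos_coeff_def)
qed

lemma cos_sum_taylor_bound:
  fixes c :: "nat \<Rightarrow> real"
  assumes "\<forall>j<m. (\<Sum>d<N. c d * real d ^ (2*j)) = 0" and x: "0 \<le> x"
  shows "\<bar>(\<Sum>d<N. c d * cos (real d * x))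
           - (-1) ^ m / fact (2*m) * (\<Sum>d<N. c d * real d ^ (2*m)) * x ^ (2*m)\<bar>
     \<le> (\<Sum>d<N. \<bar>c d\<bar> * real d ^ (2*m+2)) * (x ^ (2*m+2) / fact (2*m+2))"
    (is "\<bar>?g - ?T\<bar> \<le> _")
proof -
  define P where "P d = (\<Sum>k<2*m+2. cos_coeff k * (real d * x) ^ k)" for d
  have "(\<Sum>d<N. c d * P d) = (\<Sum>k<2*m+2. cos_coeff k * x ^ k * (\<Sum>d<N. c d * real d ^ k))"
    unfolding P_def sum_distrib_left
    by (subst sum.swap) (simp add: power_mult_distrib mult_ac sum_distrib_left)
  also have "\<dots> = (-1) ^ m / fact (2*m) * (\<Sum>d<N. c d * real d ^ (2*m)) * x ^ (2*m)"
    by (rule cos_coeff_sum_vanishing_moments[OF assms(1)])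
  finally have "\<bar>?g - ?T\<bar> = \<bar>\<Sum>d<N. c d * (cos (real d * x) - P d)\<bar>"
    by (simp add: sum_subtractf right_diff_distrib)
  also have "\<dots> \<le> (\<Sum>d<N. \<bar>c d\<bar> * (real d ^ (2*m+2) / fact (2*m+2) * x ^ (2*m+2)))"
  proof (rule order_trans[OF sum_abs sum_mono])
    fix d
    have "\<bar>cos (real d * x) - P d\<bar> \<le> \<bar>real d * x\<bar> ^ (2*m+2) / fact (2*m+2)"
      unfolding P_def by (rule abs_cos_minus_taylor_le)
    also have "\<dots> = real d ^ (2*m+2) / fact (2*m+2) * x ^ (2*m+2)"
      using x by (simp add: abs_mult power_mult_distrib)
    finally have "\<bar>cos (real d * x) - P d\<bar> \<le> real d ^ (2*m+2) / fact (2*m+2) * x ^ (2*m+2)" .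
    then show "\<bar>c d * (cos (real d * x) - P d)\<bar>
        \<le> \<bar>c d\<bar> * (real d ^ (2*m+2) / fact (2*m+2) * x ^ (2*m+2))"
      unfolding abs_mult by (rule mult_left_mono) simp
  qed
  also have "\<dots> = (\<Sum>d<N. \<bar>c d\<bar> * real d ^ (2*m+2)) * (x ^ (2*m+2) / fact (2*m+2))"
    unfolding sum_distrib_right by (intro sum.cong refl) (simp add: field_simps)
  finally show ?thesis .
qed

lemma even_moments_times_prod_zero:
  fixes c :: "nat \<Rightarrow> real"
  assumes mom: "\<forall>j. (\<Sum>d<N. c d * real d ^ (2*j)) = 0" and "finite E"
  shows "(\<Sum>d<N. c d * ((real d)\<^sup>2) ^ j * (\<Prod>e\<in>E. (real d)\<^sup>2 - (real e)\<^sup>2)) = 0"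
  using \<open>finite E\<close>
proof (induction arbitrary: j rule: finite_induct)
  case empty
  then show ?case using mom by (simp add: power_mult[symmetric])
next
  case (insert e E)
  have "(\<Sum>d<N. c d * ((real d)\<^sup>2) ^ j * (\<Prod>e\<in>insert e E. (real d)\<^sup>2 - (real e)\<^sup>2))
     = (\<Sum>d<N. c d * ((real d)\<^sup>2) ^ Suc j * (\<Prod>e\<in>E. (real d)\<^sup>2 - (real e)\<^sup>2))
       - (real e)\<^sup>2 * (\<Sum>d<N. c d * ((real d)\<^sup>2) ^ j * (\<Prod>e\<in>E. (real d)\<^sup>2 - (real e)\<^sup>2))"
    using insert.hyps by (simp add: sum_distrib_left sum_subtractf[symmetric] algebra_simps)
  then show ?case
    by (simp only: insert.IH)
qed

lemma even_moments_zero_imp_zero: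
  fixes c :: "nat \<Rightarrow> real"
  assumes mom: "\<forall>j. (\<Sum>d<N. c d * real d ^ (2*j)) = 0" and "d0 < N"
  shows "c d0 = 0"
proof -
  define E where "E = {..<N} - {d0}"
  have "(\<Sum>d<N. c d * ((real d)\<^sup>2) ^ 0 * (\<Prod>e\<in>E. (real d)\<^sup>2 - (real e)\<^sup>2))
      = (\<Sum>d<N. if d = d0 then c d0 * (\<Prod>e\<in>E. (real d0)\<^sup>2 - (real e)\<^sup>2) else 0)"
    by (intro sum.cong refl) (auto simp: E_def intro!: prod_zero)
  then have "c d0 * (\<Prod>e\<in>E. (real d0)\<^sup>2 - (real e)\<^sup>2) = 0"
    using even_moments_times_prod_zero[OF mom, of E 0] \<open>d0 < N\<close> by (simp add: E_def)
  moreover have "(\<Prod>e\<in>E. (real d0)\<^sup>2 - (real e)\<^sup>2) \<noteq> 0"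
    by (auto simp: E_def power2_eq_iff_nonneg)
  ultimately show ?thesis by simp
qed

lemma integral_cos_sum_char_fun_power:
  assumes sym: "map_pmf uminus q = q" and int: "integrable (measure_pmf q) (\<lambda>z. real_of_int z)"
  shows "integral\<^sup>L lborel
           (\<lambda>x. indicator {0..pi} x * ((\<Sum>d<N. c d * cos (real d * x)) * char_fun q x ^ n))
       = pi * (\<Sum>d<N. c d * pmf (conv_pow q n) (int d))" (is "?I = _")
proof -
  have "?I = integral\<^sup>L lborel (\<lambda>x. \<Sum>d<N. c d *
               (indicator {0..pi} x * (char_fun q x ^ n * cos (of_int (int d) * x))))"
    by (simp add: sum_distrib_left sum_distrib_right mult_ac)
  also have "\<dots> = (\<Sum>d<N. integral\<^sup>L lborel
                  (\<lambda>x. c d * (indicator {0..pi} x * (char_fun q x ^ n * cos (of_int (int d) * x)))))"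
    by (rule Bochner_Integration.integral_sum)
       (auto intro!: integrable_mult_right integrable_indicator_Icc_continuous continuous_intros
                     continuous_on_char_fun[OF int])
  also have "\<dots> = (\<Sum>d<N. c d * (pi * pmf (conv_pow q n) (int d)))"
    by (simp only: integral_char_fun_power_cos[OF sym] integral_mult_right_zero)
  finally show ?thesis
    by (simp add: sum_distrib_left mult_ac)
qed

lemma mixed_char_fun_power:
  "mixed_char_fun q x ^ t = (\<Sum>k\<le>t. real (t choose k) / 2 ^ t * char_fun q x ^ (t + k))"
proof -
  have "mixed_char_fun q x ^ t = char_fun q x ^ t * (char_fun q x + 1) ^ t / 2 ^ t"
    unfolding mixed_char_fun_def by (simp add: power_divide power_mult_distrib add.commute)
  then show ?thesis
    by (simp add: binomial_ring sum_distrib_left sum_divide_distrib power_add mult_ac)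
qed

lemma integral_cos_sum_mixed_char_fun_power:
  assumes sym: "map_pmf uminus q = q" and int: "integrable (measure_pmf q) (\<lambda>z. real_of_int z)"
    and orth: "\<And>n. n \<ge> 1 \<Longrightarrow> (\<Sum>d<N. c d * pmf (conv_pow q n) (int d)) = 0"
    and "t \<ge> 1"
  shows "integral\<^sup>L lborel
           (\<lambda>x. indicator {0..pi} x * ((\<Sum>d<N. c d * cos (real d * x)) * mixed_char_fun q x ^ t)) = 0"
proof -
  define g where "g x = (\<Sum>d<N. c d * cos (real d * x))" for x
  have "integral\<^sup>L lborel (\<lambda>x. indicator {0..pi} x * (g x * mixed_char_fun q x ^ t))
      = integral\<^sup>L lborel (\<lambda>x. \<Sum>k\<le>t. real (t choose k) / 2 ^ t *
                                (indicator {0..pi} x * (g x * char_fun q x ^ (t + k))))"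
    unfolding mixed_char_fun_power by (simp add: sum_distrib_left mult_ac)
  also have "\<dots> = (\<Sum>k\<le>t. integral\<^sup>L lborel (\<lambda>x. real (t choose k) / 2 ^ t *
                                (indicator {0..pi} x * (g x * char_fun q x ^ (t + k)))))"
    by (rule Bochner_Integration.integral_sum)
       (auto simp: g_def intro!: integrable_mult_right integrable_indicator_Icc_continuous
                                continuous_intros continuous_on_char_fun[OF int])
  finally show ?thesis
    using \<open>t \<ge> 1\<close> by (simp add: g_def integral_cos_sum_char_fun_power[OF sym int] orth)
qed

lemma return_probabilities_independent:
  fixes c :: "nat \<Rightarrow> real"
  assumes q: "good_increment q"
    and orth: "\<And>n. n \<ge> 1 \<Longrightarrow> (\<Sum>d<N. c d * pmf (conv_pow q n) (int d)) = 0"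
    and "d0 < N"
  shows "c d0 = 0"
proof -
  have int2: "integrable (measure_pmf q) (\<lambda>z. (real_of_int z)\<^sup>2)"
    and int1: "integrable (measure_pmf q) (\<lambda>z. real_of_int z)"
    and sym: "map_pmf uminus q = q"
    and gen: "int_subgroup_gen (set_pmf q) = UNIV"
    using q by (auto simp: good_increment_def map_pmf_uminus_eq_iff)
  define g where "g x = (\<Sum>d<N. c d * cos (real d * x))" for x
  have cont: "continuous_on {0..pi} g" "continuous_on {0..pi} (mixed_char_fun q)"
    unfolding g_def mixed_char_fun_def
    by (auto intro!: continuous_intros continuous_on_char_fun[OF int1])
  have orth_mixed: "\<And>t. t \<ge> 1 \<Longrightarrow>
      integral\<^sup>L lborel (\<lambda>x. indicator {0..pi} x * (g x * mixed_char_fun q x ^ t)) = 0"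
    using integral_cos_sum_mixed_char_fun_power[OF sym int1 orth] by (simp add: g_def)
  have "(\<Sum>d<N. c d * real d ^ (2*m)) = 0" for m
  proof (induction m rule: less_induct)
    case (less m)
    define \<kappa> where "\<kappa> = (-1) ^ m / fact (2*m) * (\<Sum>d<N. c d * real d ^ (2*m))"
    define B where "B = (\<Sum>d<N. \<bar>c d\<bar> * real d ^ (2*m+2)) / fact (2*m+2)"
    have taylor: "\<bar>g x - \<kappa> * x ^ (2*m)\<bar> \<le> B * x ^ (2*m+2)" if "0 \<le> x" for x
      using cos_sum_taylor_bound[OF _ that] less by (simp add: g_def \<kappa>_def B_def)
    have "\<kappa> = 0"
      by (rule laplace_leading_coeff_zero[where k="2*m" and B=B
               and C="3 / 4 * measure_pmf.expectation q (\<lambda>z. (real_of_int z)\<^sup>2)",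
               OF cont orth_mixed _ _ _ mixed_char_fun_bounded_away[OF gen int1]])
         (simp_all only: taylor mixed_char_fun_lower_bound[OF int2], simp)
    then show ?case by (simp add: \<kappa>_def)
  qed
  then show ?thesis
    using even_moments_zero_imp_zero \<open>d0 < N\<close> by blast
qed

section \<open>Interpolation in the span of the step kernels\<close>

definition trivial_annihilator :: "nat \<Rightarrow> (nat \<Rightarrow> real) set \<Rightarrow> bool" where
  "trivial_annihilator n V \<longleftrightarrow> (\<forall>c. (\<forall>v\<in>V. (\<Sum>i<n. c i * v i) = 0) \<longrightarrow> (\<forall>i<n. c i = 0))"

lemma trivial_annihilator_pivot:
  assumes "trivial_annihilator (Suc n) V"
  shows "\<exists>v\<in>V. v n \<noteq> 0"
proof (rule ccontr)
  define c :: "nat \<Rightarrow> real" where "c i = (if i = n then 1 else 0)" for i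
  assume "\<not> (\<exists>v\<in>V. v n \<noteq> 0)"
  then have "\<forall>v\<in>V. (\<Sum>i<Suc n. c i * v i) = 0"
    by (simp add: c_def sum.If_cases)
  then have "c n = 0"
    using assms[unfolded trivial_annihilator_def, rule_format, of c n] by simp
  then show False
    by (simp add: c_def)
qed

lemma trivial_annihilator_eliminate:
  assumes V: "trivial_annihilator (Suc n) V" and v0: "v0 \<in> V" "v0 n \<noteq> 0"
  shows "trivial_annihilator n ((\<lambda>v i. v i - v n / v0 n * v0 i) ` V)"
  unfolding trivial_annihilator_def
proof (rule allI, rule impI)
  fix c assume c: "\<forall>v\<in>(\<lambda>v i. v i - v n / v0 n * v0 i) ` V. (\<Sum>i<n. c i * v i) = 0"
  define S where "S = (\<Sum>i<n. c i * v0 i)"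
  define c' where "c' i = (if i < n then c i else - S / v0 n)" for i
  have "(\<Sum>i<Suc n. c' i * v i) = 0" if "v \<in> V" for v
  proof -
    have "(\<Sum>i<n. c i * (v i - v n / v0 n * v0 i)) = 0"
      using c that by auto
    then have "(\<Sum>i<n. c i * v i) = v n / v0 n * S"
      unfolding S_def by (simp add: algebra_simps sum_subtractf sum_distrib_left)
    then show ?thesis
      using v0(2) by (simp add: c'_def)
  qed
  then have "\<forall>i<Suc n. c' i = 0"
    using V[unfolded trivial_annihilator_def, rule_format, of c'] by blast
  then show "\<forall>i<n. c i = 0"
    by (metis c'_def less_SucI)
qed

lemma lin_span_eliminate:
  assumes "w \<in> lin_span ((\<lambda>v i. v i - v n / v0 n * v0 i) ` V)" and v0: "v0 \<in> V" "v0 n \<noteq> 0"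
  shows "w \<in> lin_span V \<and> w n = 0"
  using assms(1)
proof (induction rule: lin_span.induct)
  case (base u)
  then obtain v where v: "v \<in> V" "u = (\<lambda>i. v i - v n / v0 n * v0 i)"
    by auto
  have "(\<lambda>i. 1 * v i + (- (v n / v0 n)) * v0 i) \<in> lin_span V"
    using v(1) v0(1) by (intro lin_span.lin lin_span.base)
  then show ?case
    using v(2) v0(2) by simp
qed (auto intro: lin_span.lin)

lemma trivial_annihilator_interpolates:
  assumes "V \<noteq> {}" "trivial_annihilator n V"
  shows "\<exists>w\<in>lin_span V. \<forall>i<n. w i = u i"
  using assms
proof (induction n arbitrary: V u)
  case 0
  then show ?case by (auto intro: lin_span.base)
next
  case (Suc n)
  obtain v0 where v0: "v0 \<in> V" "v0 n \<noteq> 0"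
    using trivial_annihilator_pivot[OF Suc.prems(2)] by blast
  let ?V' = "(\<lambda>v i. v i - v n / v0 n * v0 i) ` V"
  have "?V' \<noteq> {}" "trivial_annihilator n ?V'"
    using Suc.prems(1) trivial_annihilator_eliminate[OF Suc.prems(2) v0] by auto
  then have "\<exists>w'\<in>lin_span ?V'. \<forall>i<n. w' i = u i - u n / v0 n * v0 i"
    by (rule Suc.IH)
  then obtain w' where w': "w' \<in> lin_span ?V'" "\<forall>i<n. w' i = u i - u n / v0 n * v0 i"
    by (elim bexE)
  have "w' \<in> lin_span V" "w' n = 0"
    using lin_span_eliminate[OF w'(1) v0] by auto
  define w where "w i = 1 * w' i + u n / v0 n * v0 i" for i
  have "w \<in> lin_span V"
    unfolding w_def using \<open>w' \<in> lin_span V\<close> lin_span.base[OF v0(1)] by (rule lin_span.lin)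
  moreover have "\<forall>i<Suc n. w i = u i"
    using w'(2) \<open>w' n = 0\<close> v0(2) by (auto simp: w_def less_Suc_eq)
  ultimately show ?case by blast
qed

definition abs_indicator :: "int \<Rightarrow> int \<Rightarrow> real" where
  "abs_indicator d j = (if \<bar>j\<bar> = d then 1 else 0)"

lemma abs_indicator_in_kernel_span:
  assumes q: "good_increment q"
  shows "\<exists>k\<in>lin_span ((\<lambda>n. pmf (conv_pow q n)) ` {1..}). \<forall>j\<in>{-L..L}. k j = abs_indicator d j"
proof -
  have sym: "map_pmf uminus q = q"
    using q by (simp add: good_increment_def map_pmf_uminus_eq_iff)
  define N where "N = Suc (nat L)"
  define V where "V = (\<lambda>n i. pmf (conv_pow q n) (int i)) ` {1..}"
  have "trivial_annihilator N V"
    unfolding trivial_annihilator_def V_def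
    using return_probabilities_independent[OF q] by auto
  then obtain w where w: "w \<in> lin_span V" "\<forall>i<N. w i = abs_indicator d (int i)"
    using trivial_annihilator_interpolates[of V N "\<lambda>i. abs_indicator d (int i)"]
    by (auto simp: V_def)
  have kernels: "(\<lambda>v j. v (nat \<bar>j\<bar>)) ` V = (\<lambda>n. pmf (conv_pow q n)) ` {1..}"
    unfolding V_def image_image
    by (intro image_cong refl ext) (simp add: pmf_conv_pow_uminus[OF sym] abs_if)
  define k where "k j = w (nat \<bar>j\<bar>)" for j
  have "k \<in> lin_span ((\<lambda>v j. v (nat \<bar>j\<bar>)) ` V)"
    unfolding k_def by (rule lin_span_precompose[OF w(1)])
  then have "k \<in> lin_span ((\<lambda>n. pmf (conv_pow q n)) ` {1..})"
    by (simp only: kernels)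
  moreover have "\<forall>j\<in>{-L..L}. k j = abs_indicator d j"
    using w(2) by (auto simp: N_def k_def abs_indicator_def)
  ultimately show ?thesis by blast
qed

lemma kernel_corr_sum_abs_indicator_eq:
  assumes q: "good_increment q"
    and eq: "\<And>ts. ts \<noteq> [] \<Longrightarrow> (\<forall>t\<in>set ts. t \<ge> 1) \<Longrightarrow>
      kernel_corr_sum \<theta> L (map (\<lambda>t. pmf (conv_pow q t)) ts)
      = kernel_corr_sum \<theta>' L (map (\<lambda>t. pmf (conv_pow q t)) ts)"
    and "ds \<noteq> []"
  shows "kernel_corr_sum \<theta> L (map abs_indicator ds) = kernel_corr_sum \<theta>' L (map abs_indicator ds)"
proof -
  let ?K = "(\<lambda>n. pmf (conv_pow q n)) ` {1..}"
  have "\<forall>d. \<exists>k. k \<in> lin_span ?K \<and> (\<forall>j\<in>{-L..L}. k j = abs_indicator d j)"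
  proof
    fix d
    from abs_indicator_in_kernel_span[OF q, of L d]
    show "\<exists>k. k \<in> lin_span ?K \<and> (\<forall>j\<in>{-L..L}. k j = abs_indicator d j)"
      unfolding Bex_def .
  qed
  then obtain k where k: "\<forall>d. k d \<in> lin_span ?K \<and> (\<forall>j\<in>{-L..L}. k d j = abs_indicator d j)"
    by (rule choice[THEN exE])
  have agree: "list_all2 (\<lambda>k k'. \<forall>j\<in>{-L..L}. k j = k' j) (map abs_indicator ds) (map k ds)"
    using k by (simp add: list_all2_map1 list_all2_map2 list.rel_refl)
  have "kernel_corr_sum \<theta> L ks = kernel_corr_sum \<theta>' L ks" if "ks \<noteq> []" "set ks \<subseteq> ?K" for ks
  proof -
    have "ks \<in> map (\<lambda>t. pmf (conv_pow q t)) ` lists {1..}"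
      unfolding lists_image[symmetric] using \<open>set ks \<subseteq> ?K\<close> by (simp only: lists_eq_set mem_Collect_eq)
    then obtain ts where "ks = map (\<lambda>t. pmf (conv_pow q t)) ts" "set ts \<subseteq> {1..}"
      by auto
    then show ?thesis
      using eq \<open>ks \<noteq> []\<close> by auto
  qed
  then have "kernel_corr_sum \<theta> L (map k ds) = kernel_corr_sum \<theta>' L (map k ds)"
    by (rule kernel_corr_sum_eq_lin_span) (use \<open>ds \<noteq> []\<close> k in auto)
  then show ?thesis
    using kernel_corr_sum_cong[OF agree] by simp
qed

section \<open>Bias functions supported on an interval\<close>

lemma sum_abs_indicator:
  assumes "0 \<le> d" "d \<le> L"
  shows "(\<Sum>j\<in>{-L..L}. abs_indicator d j * h j) = (if d = 0 then h 0 else h d + h (- d))"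
proof -
  have "(\<Sum>j\<in>{-L..L}. abs_indicator d j * h j)
      = (\<Sum>j\<in>{-L..L}. (if j = d then h d else 0) + (if j = - d \<and> d \<noteq> 0 then h (- d) else 0))"
    by (intro sum.cong refl) (use assms in \<open>auto simp: abs_indicator_def\<close>)
  then show ?thesis
    using assms by (simp add: sum.distrib)
qed

locale interval_support =
  fixes \<theta> :: "int \<Rightarrow> real" and a b L :: int
  assumes support: "\<And>z. \<theta> z \<noteq> 0 \<Longrightarrow> a \<le> z \<and> z \<le> b"
    and endpoints: "\<theta> a \<noteq> 0" "\<theta> b \<noteq> 0"
    and width: "b - a = L"
begin

lemma width_nonneg: "0 \<le> L"
  using support[OF endpoints(1)] width by simp

lemma outside: "z < a \<or> b < z \<Longrightarrow> \<theta> z = 0"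
  using support by force

lemma kernel_corr_outside: "z < a \<or> b < z \<Longrightarrow> kernel_corr \<theta> L ks z = 0"
  using outside kernel_corr_zero by blast

lemma finite_support: "finite {z. \<theta> z \<noteq> 0}"
  by (rule finite_subset[of _ "{a..b}"]) (use support in auto)

lemma support_width: "support_width_le \<theta> L"
  unfolding support_width_le_def
proof (intro allI impI)
  fix z w assume "\<theta> z \<noteq> 0" "\<theta> w \<noteq> 0"
  with support[of z] support[of w] width show "\<bar>z - w\<bar> \<le> L" by linarith
qed

lemma sum_support_shift:
  assumes "a \<noteq> b"
  shows "(\<Sum>z\<in>{z. \<theta> z \<noteq> 0}. \<theta> z * (if z + s = a then X else if z + s = b then Y else 0))
       = \<theta> (a - s) * X + \<theta> (b - s) * Y"
proof -
  have "(\<Sum>z\<in>{z. \<theta> z \<noteq> 0}. \<theta> z * (if z + s = a then X else if z + s = b then Y else 0))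
      = (\<Sum>z\<in>{z. \<theta> z \<noteq> 0}. (if z = a - s then \<theta> (a - s) * X else 0)
                               + (if z = b - s then \<theta> (b - s) * Y else 0))"
    by (intro sum.cong refl) (use assms in auto)
  then show ?thesis
    using finite_support by (simp add: sum.distrib)
qed

lemma kernel_corr_abs_indicator_left:
  assumes "0 \<le> i" "i \<le> L"
  shows "kernel_corr \<theta> L [abs_indicator i] a = \<theta> a * \<theta> (a + i)"
  using sum_abs_indicator[OF assms, of "\<lambda>j. \<theta> (a + j)"] outside[of "a - i"] assms by auto

lemma kernel_corr_abs_indicator_right:
  assumes "0 \<le> i" "i \<le> L"
  shows "kernel_corr \<theta> L [abs_indicator i] b = \<theta> b * \<theta> (b - i)"
  using sum_abs_indicator[OF assms, of "\<lambda>j. \<theta> (b + j)"] outside[of "b + i"] assms by auto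

text \<open>Since \<open>\<theta>\<close> vanishes outside \<open>{a..a + L}\<close>, the kernel \<open>abs_indicator L\<close> only links the two
  endpoints to each other.\<close>

lemma kernel_corr_abs_indicator_width:
  assumes "0 < L"
  shows "kernel_corr \<theta> L (abs_indicator L # ks) z
       = \<theta> z * (if z = a then kernel_corr \<theta> L ks b else if z = b then kernel_corr \<theta> L ks a else 0)"
proof -
  have expand: "kernel_corr \<theta> L (abs_indicator L # ks) z
      = \<theta> z * (kernel_corr \<theta> L ks (z + L) + kernel_corr \<theta> L ks (z - L))"
    using sum_abs_indicator[of L L "\<lambda>j. kernel_corr \<theta> L ks (z + j)"] assms by simp
  consider "z = a" | "z = b" | "\<theta> z = 0" | "a < z" "z < b"
    using support[of z] by fastforce
  then show ?thesis
  proof cases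
    case 1
    then show ?thesis
      unfolding expand using width assms kernel_corr_outside[of "a - L" ks]
      by (simp add: add.commute[of a] flip: width)
  next
    case 2
    then show ?thesis
      unfolding expand using width assms kernel_corr_outside[of "b + L" ks] by (simp flip: width)
  next
    case 3
    then show ?thesis
      unfolding expand by simp
  next
    case 4
    then have "kernel_corr \<theta> L ks (z + L) = 0" "kernel_corr \<theta> L ks (z - L) = 0"
      using width by (intro kernel_corr_outside; linarith)+
    with 4 show ?thesis
      unfolding expand by simp
  qed
qed

lemma kernel_corr_sum_width_cons:
  assumes "0 < L"
  shows "kernel_corr_sum \<theta> L (abs_indicator L # ks)
       = \<theta> a * kernel_corr \<theta> L ks b + \<theta> b * kernel_corr \<theta> L ks a"
proof -
  have "a \<noteq> b" using assms width by auto
  from sum_support_shift[OF this, where s=0] show ?thesis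
    by (simp add: kernel_corr_sum_def kernel_corr_abs_indicator_width[OF assms] cong: if_cong
             del: kernel_corr.simps(2))
qed

lemma kernel_corr_sum_width:
  assumes "0 < L"
  shows "kernel_corr_sum \<theta> L [abs_indicator L] = 2 * \<theta> a * \<theta> b"
  using kernel_corr_sum_width_cons[OF assms, of "[]"] by simp

lemma kernel_corr_sum_width_abs:
  assumes "0 < L" "0 \<le> i" "i \<le> L"
  shows "kernel_corr_sum \<theta> L [abs_indicator L, abs_indicator i] = \<theta> a * \<theta> b * (\<theta> (a + i) + \<theta> (b - i))"
  using assms by (simp add: kernel_corr_sum_width_cons kernel_corr_abs_indicator_left
                            kernel_corr_abs_indicator_right algebra_simps del: kernel_corr.simps(2))

lemma kernel_corr_sum_abs_width_abs:
  assumes L: "0 < L" and i: "0 \<le> i" "i \<le> L" and j: "0 \<le> j" "j \<le> L"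
  shows "kernel_corr_sum \<theta> L [abs_indicator j, abs_indicator L, abs_indicator i]
       = \<theta> a * \<theta> b * (\<theta> (a + j) * \<theta> (b - i) + \<theta> (b - j) * \<theta> (a + i))"
proof -
  define X where "X = \<theta> a * (\<theta> b * \<theta> (b - i))"
  define Y where "Y = \<theta> b * (\<theta> a * \<theta> (a + i))"
  have G: "kernel_corr \<theta> L [abs_indicator L, abs_indicator i] w
      = (if w = a then X else if w = b then Y else 0)" for w
    using kernel_corr_abs_indicator_width[OF L, of "[abs_indicator i]" w] i
    by (simp add: X_def Y_def kernel_corr_abs_indicator_left kernel_corr_abs_indicator_right
             del: kernel_corr.simps(2))
  have shift: "(\<Sum>z\<in>{z. \<theta> z \<noteq> 0}. \<theta> z * kernel_corr \<theta> L [abs_indicator L, abs_indicator i] (z + s))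
      = \<theta> (a - s) * X + \<theta> (b - s) * Y" for s
    unfolding G using L width by (intro sum_support_shift) auto
  have "kernel_corr_sum \<theta> L [abs_indicator j, abs_indicator L, abs_indicator i]
      = \<theta> (a + j) * X + \<theta> (b - j) * Y"
  proof (cases "j = 0")
    case True
    then show ?thesis
      using sum_abs_indicator[OF j] shift[of 0] by (simp add: kernel_corr_sum_def)
  next
    case False
    have "kernel_corr_sum \<theta> L [abs_indicator j, abs_indicator L, abs_indicator i]
        = (\<Sum>z\<in>{z. \<theta> z \<noteq> 0}. \<theta> z * kernel_corr \<theta> L [abs_indicator L, abs_indicator i] (z + j))
        + (\<Sum>z\<in>{z. \<theta> z \<noteq> 0}. \<theta> z * kernel_corr \<theta> L [abs_indicator L, abs_indicator i] (z + - j))"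
      unfolding kernel_corr_sum_def kernel_corr.simps(2)[of \<theta> L "abs_indicator j"]
      using sum_abs_indicator[OF j] False
      by (simp add: distrib_left sum.distrib del: kernel_corr.simps(2))
    then show ?thesis
      using shift[of j] shift[of "- j"] outside[of "a - j"] outside[of "b + j"] False j by simp
  qed
  then show ?thesis
    by (simp add: X_def Y_def algebra_simps)
qed

lemma kernel_corr_sum_point:
  assumes "L = 0"
  shows "kernel_corr_sum \<theta> L [abs_indicator 0] = (\<theta> a)\<^sup>2"
proof -
  have "{z. \<theta> z \<noteq> 0} = {a}"
    using support endpoints width assms by force
  then show ?thesis
    using sum_abs_indicator[of 0 L "\<lambda>j. \<theta> (a + j)"] assms
    by (simp add: kernel_corr_sum_def power2_eq_square)
qed

end

lemma products_eq_imp_eq_or_neg: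
  fixes D D' :: "'a \<Rightarrow> real"
  assumes prod: "\<And>i j. i \<in> S \<Longrightarrow> j \<in> S \<Longrightarrow> D' i * D' j = D i * D j"
  shows "(\<forall>i\<in>S. D' i = D i) \<or> (\<forall>i\<in>S. D' i = - D i)"
proof (cases "\<forall>i\<in>S. D i = 0")
  case True
  then show ?thesis
    using prod by (metis mult_zero_left no_zero_divisors)
next
  case False
  then obtain i0 where i0: "i0 \<in> S" "D i0 \<noteq> 0" by blast
  have "D' i0 = D i0 \<or> D' i0 = - D i0"
    using prod[OF i0(1) i0(1)] by (simp add: square_eq_iff)
  then show ?thesis
  proof
    assume "D' i0 = D i0"
    then have "D i0 * D' j = D i0 * D j" if "j \<in> S" for j
      using prod[OF i0(1) that] by simp
    then show ?thesis
      using i0(2) by simp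
  next
    assume "D' i0 = - D i0"
    then have "D i0 * D' j = D i0 * (- D j)" if "j \<in> S" for j
      using prod[OF i0(1) that] by simp
    then show ?thesis
      using i0(2) by (metis mult_left_cancel)
  qed
qed

lemma eq_or_swap_of_sums_and_cross_sums:
  fixes x y x' y' :: "'a \<Rightarrow> real"
  assumes sum: "\<And>i. i \<in> S \<Longrightarrow> x' i + y' i = x i + y i"
    and cross: "\<And>i j. i \<in> S \<Longrightarrow> j \<in> S \<Longrightarrow> x' i * y' j + y' i * x' j = x i * y j + y i * x j"
  shows "(\<forall>i\<in>S. x' i = x i) \<or> (\<forall>i\<in>S. x' i = y i)"
proof -
  have "(x' i - y' i) * (x' j - y' j) = (x i - y i) * (x j - y j)" if "i \<in> S" "j \<in> S" for i j
  proof -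
    have "(x' i - y' i) * (x' j - y' j)
        = (x' i + y' i) * (x' j + y' j) - 2 * (x' i * y' j + y' i * x' j)"
      by (simp add: algebra_simps)
    also have "\<dots> = (x i + y i) * (x j + y j) - 2 * (x i * y j + y i * x j)"
      using sum that cross that by simp
    finally show ?thesis
      by (simp add: algebra_simps)
  qed
  then have "(\<forall>i\<in>S. x' i - y' i = x i - y i) \<or> (\<forall>i\<in>S. x' i - y' i = - (x i - y i))"
    by (rule products_eq_imp_eq_or_neg)
  then show ?thesis
  proof
    assume diff: "\<forall>i\<in>S. x' i - y' i = x i - y i"
    have "x' i = x i" if "i \<in> S" for i
      using bspec[OF diff that] sum[OF that] by linarith
    then show ?thesis by blast
  next
    assume diff: "\<forall>i\<in>S. x' i - y' i = - (x i - y i)"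
    have "x' i = y i" if "i \<in> S" for i
      using bspec[OF diff that] sum[OF that] by linarith
    then show ?thesis by blast
  qed
qed

lemma map_upto_shift: "map f [a..b] = map (\<lambda>i. f (a + i)) [0..b - a]"
  by (rule nth_equalityI) (auto simp: nth_upto)

lemma rev_map_upto_shift: "rev (map f [a..b]) = map (\<lambda>i. f (b - i)) [0..b - a]"
  by (rule nth_equalityI) (auto simp: nth_upto rev_nth)

lemma interval_support_Min_Max:
  assumes "finite {z. \<theta> z \<noteq> 0}" "{z. \<theta> z \<noteq> 0} \<noteq> {}"
  shows "interval_support \<theta> (Min {z. \<theta> z \<noteq> 0}) (Max {z. \<theta> z \<noteq> 0})
           (Max {z. \<theta> z \<noteq> 0} - Min {z. \<theta> z \<noteq> 0})"
  using Min_in[OF assms] Max_in[OF assms] assms(1) by unfold_locales auto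

lemma map_upto_eq_or_rev:
  assumes "b - a = L" "b' - a' = L"
    and "(\<forall>i\<in>{0..L}. f' (a' + i) = f (a + i)) \<or> (\<forall>i\<in>{0..L}. f' (a' + i) = f (b - i))"
  shows "map f' [a'..b'] \<in> {map f [a..b], rev (map f [a..b])}"
proof -
  have "map f' [a'..b'] = map (\<lambda>i. f' (a' + i)) [0..L]"
    using assms(2) by (simp add: map_upto_shift[of f'])
  moreover have "map f [a..b] = map (\<lambda>i. f (a + i)) [0..L]"
    using assms(1) by (simp add: map_upto_shift[of f])
  moreover have "rev (map f [a..b]) = map (\<lambda>i. f (b - i)) [0..L]"
    using assms(1) rev_map_upto_shift[of f a b] by simp
  ultimately show ?thesis
    using assms(3) by auto
qed

lemma profile_match_of_abs_indicator_sums: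
  assumes I: "interval_support \<theta> a b L" and I': "interval_support \<theta>' a' b' L"
    and nonneg: "\<And>z. 0 \<le> \<theta> z" "\<And>z. 0 \<le> \<theta>' z"
    and eq: "\<And>ds. ds \<noteq> [] \<Longrightarrow>
      kernel_corr_sum \<theta> L (map abs_indicator ds) = kernel_corr_sum \<theta>' L (map abs_indicator ds)"
  shows "(\<forall>i\<in>{0..L}. \<theta>' (a' + i) = \<theta> (a + i)) \<or> (\<forall>i\<in>{0..L}. \<theta>' (a' + i) = \<theta> (b - i))"
proof -
  interpret T: interval_support \<theta> a b L by (fact I)
  interpret T': interval_support \<theta>' a' b' L by (fact I')
  show ?thesis
  proof (cases "L = 0")
    case True
    then have "(\<theta>' a')\<^sup>2 = (\<theta> a)\<^sup>2"
      using eq[of "[0]"] T.kernel_corr_sum_point T'.kernel_corr_sum_point by simp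
    then have "\<theta>' a' = \<theta> a"
      using nonneg by (simp add: power2_eq_iff_nonneg)
    then show ?thesis
      using True by simp
  next
    case False
    then have L: "0 < L"
      using T.width_nonneg by simp
    have "\<theta>' a' * \<theta>' b' = \<theta> a * \<theta> b"
      using eq[of "[L]"] T.kernel_corr_sum_width[OF L] T'.kernel_corr_sum_width[OF L] by simp
    moreover have "\<theta> a * \<theta> b \<noteq> 0"
      using T.endpoints by simp
    ultimately have ends: "\<theta>' a' * \<theta>' b' = \<theta> a * \<theta> b" "\<theta> a * \<theta> b \<noteq> 0" .
    show ?thesis
    proof (rule eq_or_swap_of_sums_and_cross_sums)
      fix i assume "i \<in> {0..L}"
      then show "\<theta>' (a' + i) + \<theta>' (b' - i) = \<theta> (a + i) + \<theta> (b - i)"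
        using eq[of "[L, i]"] T.kernel_corr_sum_width_abs[OF L] T'.kernel_corr_sum_width_abs[OF L]
          ends
        by simp
    next
      fix i j assume "i \<in> {0..L}" "j \<in> {0..L}"
      then show "\<theta>' (a' + i) * \<theta>' (b' - j) + \<theta>' (b' - i) * \<theta>' (a' + j)
               = \<theta> (a + i) * \<theta> (b - j) + \<theta> (b - i) * \<theta> (a + j)"
        using eq[of "[i, L, j]"] T.kernel_corr_sum_abs_width_abs[OF L]
          T'.kernel_corr_sum_abs_width_abs[OF L] ends
        by simp
    qed
  qed
qed

theorem proposition4p1:
  fixes q :: "int pmf" and \<theta> \<theta>' :: "int \<Rightarrow> real"
  assumes q: "good_increment q"
    and range: "\<And>z. 0 \<le> \<theta> z \<and> \<theta> z \<le> 1" "\<And>z. 0 \<le> \<theta>' z \<and> \<theta>' z \<le> 1"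
    and fin: "finite {z. \<theta> z \<noteq> 0}" "finite {z. \<theta>' z \<noteq> 0}"
    and nz: "{z. \<theta> z \<noteq> 0} \<noteq> {}" "{z. \<theta>' z \<noteq> 0} \<noteq> {}"
    and len: "Max {z. \<theta> z \<noteq> 0} - Min {z. \<theta> z \<noteq> 0}
              = Max {z. \<theta>' z \<noteq> 0} - Min {z. \<theta>' z \<noteq> 0}"
    and eq: "\<And>t. t \<noteq> [] \<Longrightarrow> (\<forall>i\<in>set t. i \<ge> 1) \<Longrightarrow> p_theta q \<theta> t = p_theta q \<theta>' t"
  shows "map \<theta>' [Min {z. \<theta>' z \<noteq> 0} .. Max {z. \<theta>' z \<noteq> 0}]
           \<in> { map \<theta> [Min {z. \<theta> z \<noteq> 0} .. Max {z. \<theta> z \<noteq> 0}],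
               rev (map \<theta> [Min {z. \<theta> z \<noteq> 0} .. Max {z. \<theta> z \<noteq> 0}]) }"
proof -
  define L where "L = Max {z. \<theta> z \<noteq> 0} - Min {z. \<theta> z \<noteq> 0}"
  have I: "interval_support \<theta> (Min {z. \<theta> z \<noteq> 0}) (Max {z. \<theta> z \<noteq> 0}) L"
    using interval_support_Min_Max[OF fin(1) nz(1)] by (simp add: L_def)
  have I': "interval_support \<theta>' (Min {z. \<theta>' z \<noteq> 0}) (Max {z. \<theta>' z \<noteq> 0}) L"
    using interval_support_Min_Max[OF fin(2) nz(2)] len by (simp add: L_def)
  have "kernel_corr_sum \<theta> L (map (\<lambda>t. pmf (conv_pow q t)) ts)
      = kernel_corr_sum \<theta>' L (map (\<lambda>t. pmf (conv_pow q t)) ts)"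
    if "ts \<noteq> []" "\<forall>t\<in>set ts. t \<ge> 1" for ts
    using eq[OF that] fin p_theta_eq_kernel_corr_sum[OF interval_support.support_width[OF I]]
      p_theta_eq_kernel_corr_sum[OF interval_support.support_width[OF I']] by simp
  then have "kernel_corr_sum \<theta> L (map abs_indicator ds) = kernel_corr_sum \<theta>' L (map abs_indicator ds)"
    if "ds \<noteq> []" for ds
    using kernel_corr_sum_abs_indicator_eq[OF q _ that] by blast
  then have "(\<forall>i\<in>{0..L}. \<theta>' (Min {z. \<theta>' z \<noteq> 0} + i) = \<theta> (Min {z. \<theta> z \<noteq> 0} + i))
           \<or> (\<forall>i\<in>{0..L}. \<theta>' (Min {z. \<theta>' z \<noteq> 0} + i) = \<theta> (Max {z. \<theta> z \<noteq> 0} - i))"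
    using profile_match_of_abs_indicator_sums[OF I I'] range by blast
  then show ?thesis
    using len by (intro map_upto_eq_or_rev) (auto simp: L_def)
qed

end
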